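(* Let $\underline{\mathbf{r}}=(\underline r_1,\dots,\underline r_{n_1})$ and $\mathbf{c}=(c_1,\dots,c_{n_2})$ be non-increasing integer vectors and $\overline{\mathbf{r}}=(\overline r_1,\dots,\overline r_{n_1})$, $\overline{\mathbf{c}}=(\overline c_1,\dots,\overline c_{n_2})$ integer vectors with $\underline{\mathbf{r}}\le\overline{\mathbf{r}}$ and $\mathbf{c}\le\overline{\mathbf{c}}$, such that $(\underline{\mathbf{r}},\overline{\mathbf{r}},\mathbf{c},\overline{\mathbf{c}})$ is realizable and $(\underline{\mathbf{r}},\overline{\mathbf{r}},\mathbf{c},\mathbf{c})$ is not realizable. Then there is a right-most position $i$ with $c_i<\overline c_i$. Let $j$ be the left-most position with $c_j=c_i$, and define $\mathbf{a}=(a_1,\dots,a_{n_2})$, $\overline{\mathbf{a}}=(\overline a_1,\dots,\overline a_{n_2})$ by $a_j=c_j+1$, $a_k=c_k$ for $k\ne j$; and $\overline a_j=\overline c_i$, $\overline a_i=\overline c_j$, $\overline a_k=\overline c_k$ for $k\notin\{i,j\}$. Then $\mathbf{a}$ is non-increasing, $\mathbf{a}\le\overline{\mathbf{a}}$, and $(\underline{\mathbf{r}},\overline{\mathbf{r}},\mathbf{a},\overline{\mathbf{a}})$ is realizable.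
   Context: Inequalities between vectors are componentwise. A four-tuple $(\underline{\mathbf{r}},\overline{\mathbf{r}},\underline{\mathbf{c}},\overline{\mathbf{c}})$ of integer vectors (first two of length $n_1$, last two of length $n_2$) is realizable if there is a bipartite graph $G=(U,V,E)$ with $U=\{u_1,\dots,u_{n_1}\}$, $V=\{v_1,\dots,v_{n_2}\}$ such that $\underline r_i\le d_G(u_i)\le\overline r_i$ and $\underline c_j\le d_G(v_j)\le\overline c_j$ for all $i,j$. *)

theory Defs
  imports Main
begin

text \<open>Integer vectors of length n are functions nat => int, positions 0..n-1
  (0-based). A bipartite graph with sides U = {u_0..u_(n1-1)}, V = {v_0..v_(n2-1)}
  is a set E of pairs (i,j) with i < n1, j < n2 (edge u_i v_j).\<close>

definition deg_U :: "(nat \<times> nat) set \<Rightarrow> nat \<Rightarrow> nat" where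
  "deg_U E i = card {j. (i, j) \<in> E}"

definition deg_V :: "(nat \<times> nat) set \<Rightarrow> nat \<Rightarrow> nat" where
  "deg_V E j = card {i. (i, j) \<in> E}"

definition realizable ::
  "nat \<Rightarrow> nat \<Rightarrow> (nat \<Rightarrow> int) \<Rightarrow> (nat \<Rightarrow> int) \<Rightarrow> (nat \<Rightarrow> int) \<Rightarrow> (nat \<Rightarrow> int) \<Rightarrow> bool" where
  "realizable n1 n2 rl ru cl cu \<longleftrightarrow>
     (\<exists>E. E \<subseteq> {..<n1} \<times> {..<n2} \<and>
        (\<forall>i<n1. rl i \<le> int (deg_U E i) \<and> int (deg_U E i) \<le> ru i) \<and>
        (\<forall>j<n2. cl j \<le> int (deg_V E j) \<and> int (deg_V E j) \<le> cu j))"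

definition nonincreasing :: "nat \<Rightarrow> (nat \<Rightarrow> int) \<Rightarrow> bool" where
  "nonincreasing n f \<longleftrightarrow> (\<forall>i j. i \<le> j \<longrightarrow> j < n \<longrightarrow> f j \<le> f i)"

end

theory Submission
  imports Defs "HOL-Combinatorics.Permutations"
begin

text \<open>Take a graph realizing the bounds with upper column bounds \<open>cu\<close>. Since \<open>c\<close> alone is not
  realizable, some column \<open>k\<close> has degree above \<open>c k\<close>; then \<open>c k < cu k\<close>, so the right-most
  such position \<open>i\<close> exists and \<open>k \<le> i\<close>. If column \<open>i\<close> has degree exactly \<open>c i \<le> c k\<close>,
  column \<open>k\<close> has a neighbour that column \<open>i\<close> lacks, and moving that edge to column \<open>i\<close>
  keeps all row degrees. Thus the lower bound of column \<open>i\<close> can be raised by one. Swapping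
  the columns \<open>i\<close> and \<open>j\<close> transports this raise to position \<open>j\<close>, which keeps the lower
  bounds non-increasing because \<open>j\<close> starts the block of entries equal to \<open>c i\<close>.\<close>

definition realized_by ::
  "nat \<Rightarrow> nat \<Rightarrow> (nat \<Rightarrow> int) \<Rightarrow> (nat \<Rightarrow> int) \<Rightarrow> (nat \<Rightarrow> int) \<Rightarrow> (nat \<Rightarrow> int) \<Rightarrow>
     (nat \<times> nat) set \<Rightarrow> bool" where
  "realized_by n1 n2 rl ru cl cu E \<longleftrightarrow>
     E \<subseteq> {..<n1} \<times> {..<n2} \<and>
     (\<forall>i<n1. rl i \<le> int (deg_U E i) \<and> int (deg_U E i) \<le> ru i) \<and>
     (\<forall>j<n2. cl j \<le> int (deg_V E j) \<and> int (deg_V E j) \<le> cu j)"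

lemma realizable_iff_realized_by:
  "realizable n1 n2 rl ru cl cu \<longleftrightarrow> (\<exists>E. realized_by n1 n2 rl ru cl cu E)"
  by (simp add: realizable_def realized_by_def)

lemma realized_by_finite: "realized_by n1 n2 rl ru cl cu E \<Longrightarrow> finite E"
  unfolding realized_by_def by (metis finite_SigmaI finite_lessThan finite_subset)

lemma realizable_imp_col_bounds_le:
  assumes "realizable n1 n2 rl ru cl cu" "k < n2"
  shows "cl k \<le> cu k"
proof -
  obtain E where "realized_by n1 n2 rl ru cl cu E"
    using assms(1) by (auto simp: realizable_iff_realized_by)
  then have "cl k \<le> int (deg_V E k) \<and> int (deg_V E k) \<le> cu k"
    using assms(2) by (simp add: realized_by_def)
  then show ?thesis by linarith
qed

lemma not_realizable_tight_imp_col_above_lower: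
  assumes E: "realized_by n1 n2 rl ru cl cu E" and "\<not> realizable n1 n2 rl ru cl cl"
  obtains k where "k < n2" "cl k < int (deg_V E k)"
proof -
  have "\<not> realized_by n1 n2 rl ru cl cl E"
    using assms(2) unfolding realizable_iff_realized_by by blast
  then obtain k where "k < n2" "\<not> int (deg_V E k) \<le> cl k"
    using E unfolding realized_by_def by blast
  then show thesis using that by simp
qed

lemma finite_row: "finite E \<Longrightarrow> finite {j. (u, j) \<in> E}"
  by (rule finite_subset[of _ "snd ` E"]) force+

lemma finite_col: "finite E \<Longrightarrow> finite {w. (w, j) \<in> E}"
  by (rule finite_subset[of _ "fst ` E"]) force+

lemma deg_U_move_edge:
  assumes "finite E" "(u, k) \<in> E" "(u, i) \<notin> E"
  shows "deg_U (insert (u, i) (E - {(u, k)})) v = deg_U E v"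
proof (cases "v = u")
  case True
  have "{j. (v, j) \<in> insert (u, i) (E - {(u, k)})} = insert i ({j. (u, j) \<in> E} - {k})"
    using True by auto
  moreover have "card (insert i ({j. (u, j) \<in> E} - {k})) = Suc (card ({j. (u, j) \<in> E} - {k}))"
    using assms(3) finite_row[OF assms(1)] by (simp add: card_insert_disjoint)
  moreover have "Suc (card ({j. (u, j) \<in> E} - {k})) = card {j. (u, j) \<in> E}"
    using assms(2) finite_row[OF assms(1)] by (intro card_Suc_Diff1) auto
  ultimately show ?thesis
    using True by (simp add: deg_U_def)
qed (auto simp: deg_U_def intro: arg_cong[where f = card])

lemma deg_V_move_edge:
  assumes "finite E" "(u, k) \<in> E" "(u, i) \<notin> E"
  shows "deg_V (insert (u, i) (E - {(u, k)})) m =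
    (if m = i then deg_V E i + 1 else if m = k then deg_V E k - 1 else deg_V E m)"
proof -
  have "i \<noteq> k" using assms by auto
  then have "{w. (w, m) \<in> insert (u, i) (E - {(u, k)})} =
    (if m = i then insert u {w. (w, i) \<in> E} else if m = k then {w. (w, k) \<in> E} - {u}
     else {w. (w, m) \<in> E})"
    by auto
  then show ?thesis
    using assms finite_col[OF assms(1)] by (simp add: deg_V_def)
qed

lemma col_neighbour_not_in_smaller_col:
  assumes "finite E" "deg_V E i < deg_V E k"
  obtains u where "(u, k) \<in> E" "(u, i) \<notin> E"
proof -
  have "\<not> {w. (w, k) \<in> E} \<subseteq> {w. (w, i) \<in> E}"
  proof
    assume "{w. (w, k) \<in> E} \<subseteq> {w. (w, i) \<in> E}"
    then have "deg_V E k \<le> deg_V E i"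
      unfolding deg_V_def by (rule card_mono[OF finite_col[OF assms(1)]])
    with assms(2) show False by simp
  qed
  then show thesis using that by blast
qed

lemma realizable_raise_col_lower:
  assumes E: "realized_by n1 n2 rl ru cl cu E"
    and "i < n2" "cl k < int (deg_V E k)" "cl i \<le> cl k" "cl i < cu i"
  shows "realizable n1 n2 rl ru (cl(i := cl i + 1)) cu"
proof (cases "cl i < int (deg_V E i)")
  case True
  with E have "realized_by n1 n2 rl ru (cl(i := cl i + 1)) cu E"
    by (auto simp: realized_by_def)
  then show ?thesis
    unfolding realizable_iff_realized_by ..
next
  case False
  have fin: "finite E" using realized_by_finite[OF E] .
  have deg_i: "int (deg_V E i) = cl i"
    using E False \<open>i < n2\<close> by (force simp: realized_by_def)
  with assms(3,4) have "deg_V E i < deg_V E k" by linarith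
  then obtain u where u: "(u, k) \<in> E" "(u, i) \<notin> E"
    using col_neighbour_not_in_smaller_col[OF fin] by blast
  define G where "G = insert (u, i) (E - {(u, k)})"
  have "u < n1" using u E by (auto simp: realized_by_def)
  with E \<open>i < n2\<close> have "G \<subseteq> {..<n1} \<times> {..<n2}"
    by (auto simp: G_def realized_by_def)
  moreover have "deg_U G v = deg_U E v" for v
    unfolding G_def using deg_U_move_edge[OF fin u] .
  moreover have "(cl(i := cl i + 1)) m \<le> int (deg_V G m) \<and> int (deg_V G m) \<le> cu m"
    if "m < n2" for m
  proof -
    have "cl m \<le> int (deg_V E m) \<and> int (deg_V E m) \<le> cu m"
      using E that by (simp add: realized_by_def)
    then show ?thesis
      unfolding G_def deg_V_move_edge[OF fin u] using deg_i assms(3,5) by auto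
  qed
  ultimately have "realized_by n1 n2 rl ru (cl(i := cl i + 1)) cu G"
    using E by (simp add: realized_by_def)
  then show ?thesis
    unfolding realizable_iff_realized_by ..
qed

lemma realizable_raise_rightmost_slack_col:
  assumes "nonincreasing n2 c" "realizable n1 n2 rl ru c cu" "\<not> realizable n1 n2 rl ru c c"
  obtains i where "i < n2" "c i < cu i" "\<forall>m. i < m \<and> m < n2 \<longrightarrow> \<not> c m < cu m"
    "realizable n1 n2 rl ru (c(i := c i + 1)) cu"
proof -
  obtain E where E: "realized_by n1 n2 rl ru c cu E"
    using assms(2) by (auto simp: realizable_iff_realized_by)
  obtain k where k: "k < n2" "c k < int (deg_V E k)"
    using not_realizable_tight_imp_col_above_lower[OF E assms(3)] .
  define S where "S = {k. k < n2 \<and> c k < cu k}"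
  have "k \<in> S" using k E by (force simp: S_def realized_by_def)
  have "finite S" by (simp add: S_def)
  define i where "i = Max S"
  have "i \<in> S"
    unfolding i_def using \<open>finite S\<close> \<open>k \<in> S\<close> by (intro Max_in) auto
  have rightmost: "\<forall>m\<in>S. m \<le> i"
    unfolding i_def using \<open>finite S\<close> by simp
  have i: "i < n2" "c i < cu i" "k \<le> i"
    using \<open>i \<in> S\<close> \<open>k \<in> S\<close> rightmost by (auto simp: S_def)
  then have "c i \<le> c k" using assms(1) by (simp add: nonincreasing_def)
  then have "realizable n1 n2 rl ru (c(i := c i + 1)) cu"
    using realizable_raise_col_lower[OF E i(1) k(2)] i(2) by blast
  moreover have "\<forall>m. i < m \<and> m < n2 \<longrightarrow> \<not> c m < cu m"
    using rightmost by (auto simp: S_def)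
  ultimately show thesis
    using that i(1,2) by blast
qed

lemma realizable_permute_cols:
  assumes \<sigma>: "\<sigma> permutes {..<n2}" and "realizable n1 n2 rl ru cl cu"
  shows "realizable n1 n2 rl ru (cl \<circ> \<sigma>) (cu \<circ> \<sigma>)"
proof -
  obtain E where E: "realized_by n1 n2 rl ru cl cu E"
    using assms(2) by (auto simp: realizable_iff_realized_by)
  have \<sigma>_lt: "\<sigma> v < n2 \<longleftrightarrow> v < n2" for v
    using permutes_in_image[OF \<sigma>] by simp
  define F where "F = {(u, v). (u, \<sigma> v) \<in> E}"
  have "F \<subseteq> {..<n1} \<times> {..<n2}"
    using E \<sigma>_lt by (auto simp: F_def realized_by_def)
  moreover have "deg_U F u = deg_U E u" for u
  proof -
    have "{v. (u, v) \<in> F} = \<sigma> -` {w. (u, w) \<in> E}" by (auto simp: F_def)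
    moreover have "card (\<sigma> -` {w. (u, w) \<in> E}) = card {w. (u, w) \<in> E}"
      using permutes_bij[OF \<sigma>] by (intro card_vimage_inj) (auto simp: bij_is_inj bij_is_surj)
    ultimately show ?thesis
      by (simp add: deg_U_def)
  qed
  moreover have "deg_V F v = deg_V E (\<sigma> v)" for v
    by (simp add: deg_V_def F_def)
  ultimately have "realized_by n1 n2 rl ru (cl \<circ> \<sigma>) (cu \<circ> \<sigma>) F"
    using E \<sigma>_lt unfolding realized_by_def by simp
  then show ?thesis
    unfolding realizable_iff_realized_by ..
qed

lemma fun_upd_swap_eq_comp_transpose: "f(j := f i, i := f j) = f \<circ> transpose i j"
  by (auto simp: fun_eq_iff transpose_def)

lemma fun_upd_incr_comp_transpose:
  assumes "f j = f i"
  shows "f(i := f i + 1) \<circ> transpose i j = f(j := f j + 1)"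
  using assms by (auto simp: fun_eq_iff transpose_def)

lemma nonincreasing_incr_block_start:
  assumes "nonincreasing n f" "\<forall>p<j. f p \<noteq> f j"
  shows "nonincreasing n (f(j := f j + 1))"
  unfolding nonincreasing_def
proof (intro allI impI)
  fix p q assume "p \<le> q" "q < n"
  then have "f q \<le> f p" using assms(1) by (simp add: nonincreasing_def)
  moreover have "f q < f p" if "q = j" "p \<noteq> j"
  proof -
    have "p < j" using that \<open>p \<le> q\<close> by simp
    then have "f p \<noteq> f q" using assms(2) \<open>q = j\<close> by simp
    with \<open>f q \<le> f p\<close> show ?thesis by simp
  qed
  ultimately show "(f(j := f j + 1)) q \<le> (f(j := f j + 1)) p"
    by auto
qed

theorem lemma1:
  fixes n1 n2 :: nat and rl ru c cu :: "nat \<Rightarrow> int"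
  assumes "nonincreasing n1 rl" and "nonincreasing n2 c"
    and "\<forall>i<n1. rl i \<le> ru i" and "\<forall>k<n2. c k \<le> cu k"
    and "realizable n1 n2 rl ru c cu"
    and "\<not> realizable n1 n2 rl ru c c"
  shows "\<exists>i<n2. c i < cu i \<and> (\<forall>k. i < k \<and> k < n2 \<longrightarrow> \<not> c k < cu k) \<and>
           (let j = (LEAST k. c k = c i);
                a = c(j := c j + 1);
                ab = cu(j := cu i, i := cu j)
            in nonincreasing n2 a \<and> (\<forall>k<n2. a k \<le> ab k) \<and>
               realizable n1 n2 rl ru a ab)"
proof -
  obtain i where i: "i < n2" "c i < cu i" "\<forall>m. i < m \<and> m < n2 \<longrightarrow> \<not> c m < cu m"
    and raised: "realizable n1 n2 rl ru (c(i := c i + 1)) cu"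
    using realizable_raise_rightmost_slack_col[OF assms(2,5,6)] .
  define j where "j = (LEAST k. c k = c i)"
  have "j \<le> i" unfolding j_def by (rule Least_le) simp
  have "c j = c i" unfolding j_def by (rule LeastI) simp
  have "\<forall>p<j. c p \<noteq> c j"
    unfolding \<open>c j = c i\<close> unfolding j_def using not_less_Least by blast
  have "transpose i j permutes {..<n2}"
    using i(1) \<open>j \<le> i\<close> by (intro permutes_swap_id) auto
  from realizable_permute_cols[OF this raised]
  have realizable: "realizable n1 n2 rl ru (c(j := c j + 1)) (cu(j := cu i, i := cu j))"
    unfolding fun_upd_incr_comp_transpose[where f = c, OF \<open>c j = c i\<close>] fun_upd_swap_eq_comp_transpose .
  have "nonincreasing n2 (c(j := c j + 1))"
    using nonincreasing_incr_block_start[OF assms(2)] \<open>\<forall>p<j. c p \<noteq> c j\<close> .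
  moreover have "\<forall>m<n2. (c(j := c j + 1)) m \<le> (cu(j := cu i, i := cu j)) m"
    using realizable_imp_col_bounds_le[OF realizable] by simp
  ultimately show ?thesis
    using i realizable by (intro exI[of _ i], unfold Let_def j_def[symmetric]) blast
qed

end
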